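(* Let $\mathfrak B$ be a Boolean algebra. Then $\mathfrak B$ carries a strictly positive nonatomic finitely additive probability measure if and only if there is a decomposition $\mathfrak B\setminus\{0\}=\bigcup_{n<\omega}\mathfrak B_n$ such that for each $n<\omega$: (i) $\mathfrak B_n\subseteq\mathfrak B_{n+1}$; (ii) $\mathrm{int}(\mathfrak B_n)\ge 2^{-n}$; (iii) for every $a\in\mathfrak B_n$ there are disjoint $b,c\in\mathfrak B_{n+1}$ with $b\vee c\le a$.
   Context: A (finitely additive) measure on a Boolean algebra $\mathfrak B$ is a function $\mu:\mathfrak B\to[0,\infty)$ with $\mu(a\vee b)=\mu(a)+\mu(b)$ whenever $a\wedge b=0$; it is a probability if $\mu(1)=1$, and strictly positive if $\mu(a)>0$ for all $a\ne 0$. A measure $\mu$ is nonatomic if for every $\varepsilon>0$ there is a finite partition of $1_{\mathfrak B}$ into pairwise disjoint elements each of measure $<\varepsilon$. Elements $b,c$ are disjoint if $b\wedge c=0$. For a family $\mathcal F\subseteq\mathfrak B\setminus\{0\}$, the intersection number $\mathrm{int}(\mathcal F)$ is the supremum of all $\alpha\ge0$ such that for every finite sequence $a_1,\dots,a_m$ of elements of $\mathcal F$ (repetitions allowed) there is a set $I\subseteq\{1,\dots,m\}$ with $|I|\ge\alpha m$ and $\bigwedge_{i\in I}a_i\ne 0$. *)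

theory Defs
  imports Complex_Main "HOL-Library.Extended_Real"
begin

definition fa_measure :: "('a::boolean_algebra \<Rightarrow> real) \<Rightarrow> bool" where
  "fa_measure \<mu> \<longleftrightarrow> (\<forall>a. \<mu> a \<ge> 0) \<and>
     (\<forall>a b. inf a b = bot \<longrightarrow> \<mu> (sup a b) = \<mu> a + \<mu> b)"

definition fa_probability :: "('a::boolean_algebra \<Rightarrow> real) \<Rightarrow> bool" where
  "fa_probability \<mu> \<longleftrightarrow> fa_measure \<mu> \<and> \<mu> top = 1"

definition strictly_positive :: "('a::boolean_algebra \<Rightarrow> real) \<Rightarrow> bool" where
  "strictly_positive \<mu> \<longleftrightarrow> (\<forall>a. a \<noteq> bot \<longrightarrow> \<mu> a > 0)"

definition finite_partition_of_unit :: "'a::boolean_algebra list \<Rightarrow> bool" where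
  "finite_partition_of_unit ps \<longleftrightarrow>
     foldr sup ps bot = top \<and>
     (\<forall>i<length ps. \<forall>j<length ps. i \<noteq> j \<longrightarrow> inf (ps ! i) (ps ! j) = bot)"

definition nonatomic :: "('a::boolean_algebra \<Rightarrow> real) \<Rightarrow> bool" where
  "nonatomic \<mu> \<longleftrightarrow> (\<forall>\<epsilon>>0. \<exists>ps. finite_partition_of_unit ps \<and> (\<forall>p\<in>set ps. \<mu> p < \<epsilon>))"

definition meet_idx :: "'a::boolean_algebra list \<Rightarrow> nat set \<Rightarrow> 'a" where
  "meet_idx xs I = foldr inf (map (nth xs) (sorted_list_of_set I)) top"

definition int_good :: "real \<Rightarrow> 'a::boolean_algebra set \<Rightarrow> bool" where
  "int_good \<alpha> F \<longleftrightarrow> (\<forall>xs. set xs \<subseteq> F \<longrightarrow>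
     (\<exists>I\<subseteq>{..<length xs}. real (card I) \<ge> \<alpha> * real (length xs) \<and> meet_idx xs I \<noteq> bot))"

text \<open>Intersection number, as a supremum in the extended reals (int of the empty family is infinite).\<close>
definition int_num :: "'a::boolean_algebra set \<Rightarrow> ereal" where
  "int_num F = Sup {ereal \<alpha> | \<alpha>. \<alpha> \<ge> 0 \<and> int_good \<alpha> F}"

end

(*
  Forward direction: for a strictly positive nonatomic probability mu the sets
  B_n = {a. mu a > 2^-n} exhaust the nonzero elements.  A counting argument over the
  atoms generated by finitely many elements (Kelley) shows that elements of measure
  >= alpha have intersection number >= alpha, and nonatomicity cuts every a in B_n into
  two disjoint pieces of measure > 2^-(n+1).

  Backward direction: Kelley's criterion, proved here for finite families by an elementary
  minimax argument over mixtures of two-valued (ultrafilter) measures, gives at level k a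
  probability of size about 2^-k on finitely many elements of B_k.  Applied to the 2^(k-n)
  disjoint refinements in B_k of elements of B_n, and combined with compactness of the
  bounded finitely additive measures in the product topology, this yields measures with
  nu a >= 2^-n on every B_n.  One of least total mass is strictly positive because the B_n
  cover the nonzero elements, and it is nonatomic: otherwise some ultrafilter carries mass
  eps > 0, and removing that mass keeps all the bounds, since at most one of the 2^k
  disjoint refinements in B_(n+k) of a lies in the ultrafilter.
*)

theory Submission
  imports Defs "HOL-Analysis.Analysis"
begin

section \<open>Finitely additive measures\<close>

lemma fa_measure_nonneg: "fa_measure \<mu> \<Longrightarrow> 0 \<le> \<mu> a"
  unfolding fa_measure_def by auto

lemma fa_measure_add: "fa_measure \<mu> \<Longrightarrow> inf a b = bot \<Longrightarrow> \<mu> (sup a b) = \<mu> a + \<mu> b"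
  unfolding fa_measure_def by auto

lemma fa_measure_bot: "fa_measure \<mu> \<Longrightarrow> \<mu> bot = 0"
  using fa_measure_add[of \<mu> bot bot] by simp

lemma fa_measure_split: "fa_measure \<mu> \<Longrightarrow> \<mu> a = \<mu> (inf a b) + \<mu> (inf a (- b))"
  using fa_measure_add[of \<mu> "inf a b" "inf a (- b)"]
  by (simp add: inf_sup_distrib1[symmetric] inf_aci)

lemma fa_measure_mono: "fa_measure \<mu> \<Longrightarrow> a \<le> b \<Longrightarrow> \<mu> a \<le> \<mu> b"
  using fa_measure_split[of \<mu> b a] fa_measure_nonneg[of \<mu> "inf b (- a)"]
  by (simp add: inf.absorb2)

lemma fa_measure_le_top: "fa_measure \<mu> \<Longrightarrow> \<mu> a \<le> \<mu> top"
  by (simp add: fa_measure_mono)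

abbreviation disjoint_list :: "'a::boolean_algebra list \<Rightarrow> bool" where
  "disjoint_list \<equiv> sorted_wrt (\<lambda>x y. inf x y = bot)"

lemma disjoint_list_iff_nth:
  "disjoint_list xs \<longleftrightarrow> (\<forall>i<length xs. \<forall>j<length xs. i \<noteq> j \<longrightarrow> inf (xs ! i) (xs ! j) = bot)"
  by (auto simp: sorted_wrt_iff_nth_less) (metis inf_commute nat_neq_iff)

lemma inf_foldr_sup_eq_bot:
  "(\<forall>q\<in>set ps. inf p q = bot) \<Longrightarrow> inf p (foldr sup ps bot) = (bot::'a::boolean_algebra)"
  by (induction ps) (auto simp: inf_sup_distrib1)

lemma foldr_sup_le: "(\<forall>p\<in>set ps. p \<le> a) \<Longrightarrow> foldr sup ps (bot::'a::boolean_algebra) \<le> a"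
  by (induction ps) auto

lemma fa_measure_foldr_sup:
  "fa_measure \<mu> \<Longrightarrow> disjoint_list ps \<Longrightarrow> \<mu> (foldr sup ps bot) = sum_list (map \<mu> ps)"
  by (induction ps) (simp_all add: fa_measure_bot fa_measure_add inf_foldr_sup_eq_bot)

lemma sum_list_le_fa_measure:
  "fa_measure \<mu> \<Longrightarrow> disjoint_list ps \<Longrightarrow> (\<forall>p\<in>set ps. p \<le> a) \<Longrightarrow> sum_list (map \<mu> ps) \<le> \<mu> a"
  by (metis fa_measure_foldr_sup fa_measure_mono foldr_sup_le)

fun disjointed_list :: "'a::boolean_algebra list \<Rightarrow> 'a list" where
  "disjointed_list [] = []"
| "disjointed_list (x # xs) = x # map (\<lambda>y. inf y (- x)) (disjointed_list xs)"

lemma foldr_sup_disjointed_list: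
  "foldr sup (disjointed_list xs) (bot::'a::boolean_algebra) = foldr sup xs bot"
proof (induction xs)
  case (Cons x xs)
  have "foldr sup (map (\<lambda>y. inf y (- x)) ys) bot = inf (foldr sup ys bot) (- x)" for ys :: "'a list"
    by (induction ys) (auto simp: inf_sup_distrib2)
  then show ?case using Cons by (simp add: sup_inf_distrib1)
qed simp

lemma disjoint_list_disjointed_list: "disjoint_list (disjointed_list xs)"
proof (induction xs)
  case (Cons x xs)
  have "disjoint_list (map (\<lambda>y. inf y (- x)) (disjointed_list xs))"
    unfolding sorted_wrt_map using Cons
    by (rule sorted_wrt_mono_rel[rotated]) (metis inf_bot_left inf_left_commute inf_assoc)
  then show ?case by (simp add: inf_left_commute)
qed simp

lemma disjointed_list_le: "p \<in> set (disjointed_list xs) \<Longrightarrow> \<exists>x\<in>set xs. p \<le> x"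
  by (induction xs arbitrary: p) (auto intro: le_infI1)

lemma meet_idx_greatest: "finite I \<Longrightarrow> (\<forall>i\<in>I. t \<le> xs ! i) \<Longrightarrow> t \<le> meet_idx xs I"
proof -
  have "(\<forall>y\<in>set L. t \<le> y) \<Longrightarrow> t \<le> foldr inf L top" for L :: "'a list" by (induction L) auto
  then show "finite I \<Longrightarrow> (\<forall>i\<in>I. t \<le> xs ! i) \<Longrightarrow> t \<le> meet_idx xs I"
    unfolding meet_idx_def by simp
qed

lemma meet_idx_lower: "finite I \<Longrightarrow> i \<in> I \<Longrightarrow> meet_idx xs I \<le> xs ! i"
proof -
  have "y \<in> set L \<Longrightarrow> foldr inf L top \<le> y" for y and L :: "'a list"
    by (induction L) (auto intro: le_infI2)
  then show "finite I \<Longrightarrow> i \<in> I \<Longrightarrow> meet_idx xs I \<le> xs ! i"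
    unfolding meet_idx_def by simp
qed

lemma int_good_subset: "int_good \<alpha> F \<Longrightarrow> G \<subseteq> F \<Longrightarrow> int_good \<alpha> G"
  unfolding int_good_def by blast

lemma int_num_ge: "0 \<le> \<alpha> \<Longrightarrow> int_good \<alpha> F \<Longrightarrow> ereal \<alpha> \<le> int_num F"
  unfolding int_num_def by (rule Sup_upper) auto

lemma int_good_below_int_num:
  assumes "ereal c \<le> int_num F" "\<delta> < c"
  obtains \<alpha> where "\<delta> < \<alpha>" "int_good \<alpha> F"
proof -
  have "ereal \<delta> < int_num F" using assms(1) by (rule less_le_trans[rotated]) (simp add: assms(2))
  then show ?thesis using that unfolding int_num_def by (auto simp: less_Sup_iff)
qed

section \<open>Nonatomic probabilities yield splitting levels\<close>

lemma sum_list_fa_measure_inf_Cons: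
  assumes \<mu>: "fa_measure \<mu>"
  shows "(\<Sum>x\<leftarrow>a # xs. \<mu> (inf x e)) =
    \<mu> (inf e a) + (\<Sum>x\<leftarrow>xs. \<mu> (inf x (inf e a))) + (\<Sum>x\<leftarrow>xs. \<mu> (inf x (inf e (- a))))"
proof -
  have split: "\<mu> (inf x e) = \<mu> (inf x (inf e a)) + \<mu> (inf x (inf e (- a)))" for x
    using fa_measure_split[OF \<mu>, of "inf x e" a] by (simp add: inf_assoc)
  have "(\<Sum>x\<leftarrow>a # xs. \<mu> (inf x e)) = \<mu> (inf e a) + (\<Sum>x\<leftarrow>xs. \<mu> (inf x e))"
    by (simp add: inf_commute)
  also have "\<dots> = \<mu> (inf e a) + (\<Sum>x\<leftarrow>xs. \<mu> (inf x (inf e a)) + \<mu> (inf x (inf e (- a))))"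
    by (simp only: split)
  finally show ?thesis by (simp add: sum_list_addf)
qed

lemma sum_list_fa_measure_le_count:
  fixes \<mu> :: "'a::boolean_algebra \<Rightarrow> real"
  assumes \<mu>: "fa_measure \<mu>"
  shows "\<exists>t\<le>e. (e \<noteq> bot \<longrightarrow> t \<noteq> bot) \<and>
           (\<Sum>x\<leftarrow>xs. \<mu> (inf x e)) \<le> real (length (filter (\<lambda>x. t \<le> x) xs)) * \<mu> e"
proof (induction xs arbitrary: e)
  case Nil
  show ?case by auto
next
  case (Cons a xs)
  define e1 where "e1 = inf e a"
  define e2 where "e2 = inf e (- a)"
  obtain t1 where t1: "t1 \<le> e1" "e1 \<noteq> bot \<longrightarrow> t1 \<noteq> bot"
      "(\<Sum>x\<leftarrow>xs. \<mu> (inf x e1)) \<le> length (filter (\<lambda>x. t1 \<le> x) xs) * \<mu> e1"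
    using Cons.IH[of e1] by blast
  obtain t2 where t2: "t2 \<le> e2" "e2 \<noteq> bot \<longrightarrow> t2 \<noteq> bot"
      "(\<Sum>x\<leftarrow>xs. \<mu> (inf x e2)) \<le> length (filter (\<lambda>x. t2 \<le> x) xs) * \<mu> e2"
    using Cons.IH[of e2] by blast
  define c1 where "c1 = length (filter (\<lambda>x. t1 \<le> x) xs)"
  define c2 where "c2 = length (filter (\<lambda>x. t2 \<le> x) xs)"
  have sum: "(\<Sum>x\<leftarrow>a # xs. \<mu> (inf x e)) \<le> Suc c1 * \<mu> e1 + c2 * \<mu> e2"
    using sum_list_fa_measure_inf_Cons[OF \<mu>, where a = a and xs = xs and e = e] t1(3) t2(3)
    by (simp add: c1_def c2_def e1_def e2_def algebra_simps)
  have mass: "\<mu> e = \<mu> e1 + \<mu> e2" unfolding e1_def e2_def by (rule fa_measure_split[OF \<mu>])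
  have nonneg: "0 \<le> \<mu> e1" "0 \<le> \<mu> e2" using fa_measure_nonneg[OF \<mu>] by auto
  have "sup e1 e2 = e" unfolding e1_def e2_def by (simp add: inf_sup_distrib1[symmetric])
  then consider (bot) "e = bot" | (keep) "e1 \<noteq> bot" "e2 = bot \<or> c2 \<le> Suc c1"
    | (drop) "e2 \<noteq> bot" "e1 = bot \<or> Suc c1 \<le> c2"
    by fastforce
  then show ?case
  proof cases
    case bot
    then show ?thesis by (intro exI[of _ bot]) (simp add: fa_measure_bot[OF \<mu>])
  next
    case keep
    have "c2 * \<mu> e2 \<le> Suc c1 * \<mu> e2"
      using keep nonneg(2) fa_measure_bot[OF \<mu>] by (auto intro: mult_right_mono)
    moreover have "t1 \<le> a" using t1(1) by (simp add: e1_def)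
    ultimately show ?thesis
      using sum mass t1(1,2) keep(1) by (intro exI[of _ t1]) (auto simp: c1_def e1_def algebra_simps)
  next
    case drop
    have "Suc c1 * \<mu> e1 \<le> c2 * \<mu> e1"
      using drop nonneg(1) fa_measure_bot[OF \<mu>] by (auto intro: mult_right_mono)
    moreover have "\<not> t2 \<le> a"
      using t2(1,2) drop(1) unfolding e2_def by (metis inf.absorb1 inf_compl_bot_right le_inf_iff)
    ultimately show ?thesis
      using sum mass t2(1,2) drop(1) by (intro exI[of _ t2]) (auto simp: c2_def e2_def algebra_simps)
  qed
qed

lemma int_good_superlevel:
  assumes \<mu>: "fa_probability \<mu>" and nontriv: "(bot::'a::boolean_algebra) \<noteq> top"
  shows "int_good \<alpha> {a::'a. \<alpha> \<le> \<mu> a}"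
  unfolding int_good_def
proof (intro allI impI)
  fix xs :: "'a list" assume xs: "set xs \<subseteq> {a. \<alpha> \<le> \<mu> a}"
  have fa: "fa_measure \<mu>" and top: "\<mu> top = 1" using \<mu> unfolding fa_probability_def by auto
  obtain t :: 'a where t: "t \<noteq> bot" "(\<Sum>x\<leftarrow>xs. \<mu> x) \<le> length (filter (\<lambda>x. t \<le> x) xs)"
    using sum_list_fa_measure_le_count[OF fa, of top xs] nontriv top by auto
  define I where "I = {i. i < length xs \<and> t \<le> xs ! i}"
  have "\<alpha> * real (length xs) \<le> (\<Sum>x\<leftarrow>xs. \<mu> x)"
    using sum_list_mono[of xs "\<lambda>_. \<alpha>" \<mu>] xs by (auto simp: sum_list_triv mult.commute)
  also have "\<dots> \<le> real (card I)" using t(2) by (simp add: I_def length_filter_conv_card)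
  finally have "\<alpha> * real (length xs) \<le> real (card I)" .
  moreover have "t \<le> meet_idx xs I" by (rule meet_idx_greatest) (simp_all add: I_def)
  then have "meet_idx xs I \<noteq> bot" using t(1) bot_unique by metis
  ultimately show "\<exists>I\<subseteq>{..<length xs}. \<alpha> * real (length xs) \<le> real (card I) \<and> meet_idx xs I \<noteq> bot"
    by (intro exI[of _ I]) (auto simp: I_def)
qed

lemma fa_measure_between_on_partition:
  assumes \<mu>: "fa_measure \<mu>"
  shows "disjoint_list ps \<Longrightarrow> (\<forall>p\<in>set ps. \<mu> (inf a p) < \<delta>) \<Longrightarrow> 0 \<le> lo \<Longrightarrow>
    lo < \<mu> (inf a (foldr sup ps bot)) \<Longrightarrow>
    \<exists>b. b \<le> inf a (foldr sup ps bot) \<and> lo < \<mu> b \<and> \<mu> b < lo + \<delta>"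
proof (induction ps arbitrary: lo)
  case Nil
  then show ?case using fa_measure_bot[OF \<mu>] by simp
next
  case (Cons p ps)
  define J where "J = inf a (foldr sup ps bot)"
  have disj: "inf (inf a p) J = bot"
    using inf_foldr_sup_eq_bot[of ps p] Cons.prems(1) by (simp add: J_def inf_aci)
  have eq: "inf a (foldr sup (p # ps) bot) = sup (inf a p) J"
    by (simp add: J_def inf_sup_distrib1)
  show ?case
  proof (cases "lo < \<mu> (inf a p)")
    case True
    then show ?thesis using Cons.prems(2,3) eq by (intro exI[of _ "inf a p"]) auto
  next
    case False
    then obtain b where b: "b \<le> J" "lo - \<mu> (inf a p) < \<mu> b" "\<mu> b < lo - \<mu> (inf a p) + \<delta>"
      using Cons.IH[of "lo - \<mu> (inf a p)"] Cons.prems eq fa_measure_add[OF \<mu> disj]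
      by (auto simp: J_def)
    have "inf (inf a p) b = bot"
      using inf_mono[OF order_refl b(1), of "inf a p"] disj by (simp add: bot_unique)
    then have "\<mu> (sup (inf a p) b) = \<mu> (inf a p) + \<mu> b" by (rule fa_measure_add[OF \<mu>])
    moreover have "sup (inf a p) b \<le> inf a (foldr sup (p # ps) bot)"
      using eq b(1) by (simp add: le_supI2)
    ultimately show ?thesis using b by (intro exI[of _ "sup (inf a p) b"]) auto
  qed
qed

lemma nonatomic_fa_measure_between:
  assumes \<mu>: "fa_measure \<mu>" "nonatomic \<mu>" and "0 < \<delta>" "0 \<le> lo" "lo < \<mu> a"
  obtains b where "b \<le> a" "lo < \<mu> b" "\<mu> b < lo + \<delta>"
proof -
  obtain ps where ps: "finite_partition_of_unit ps" "\<forall>p\<in>set ps. \<mu> p < \<delta>"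
    using assms unfolding nonatomic_def by blast
  have "disjoint_list ps" and top: "foldr sup ps bot = top"
    using ps(1) unfolding finite_partition_of_unit_def disjoint_list_iff_nth by auto
  moreover have "\<forall>p\<in>set ps. \<mu> (inf a p) < \<delta>"
    using ps(2) fa_measure_mono[OF \<mu>(1)] by (meson inf_le2 le_less_trans)
  ultimately show ?thesis
    using fa_measure_between_on_partition[OF \<mu>(1), of ps a \<delta> lo] assms(4,5) that by auto
qed

lemma nonatomic_fa_measure_halving:
  assumes \<mu>: "fa_measure \<mu>" "nonatomic \<mu>" and "0 \<le> lo" "2 * lo < \<mu> a"
  obtains b c where "inf b c = bot" "sup b c \<le> a" "lo < \<mu> b" "lo < \<mu> c"
proof -
  obtain b where b: "b \<le> a" "lo < \<mu> b" "\<mu> b < lo + (\<mu> a - 2 * lo)"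
    using nonatomic_fa_measure_between[OF \<mu>, of "\<mu> a - 2 * lo" lo a] assms(3,4) by auto
  have "\<mu> a = \<mu> b + \<mu> (inf a (- b))"
    using fa_measure_split[OF \<mu>(1), of a b] b(1) by (simp add: inf.absorb2)
  moreover have "inf b (inf a (- b)) = bot" by (simp add: inf_left_commute)
  ultimately show ?thesis using that[of b "inf a (- b)"] b by simp
qed

definition splitting_levels :: "(nat \<Rightarrow> 'a::boolean_algebra set) \<Rightarrow> bool" where
  "splitting_levels B \<longleftrightarrow>
     (\<forall>n. \<forall>a\<in>B n. \<exists>b\<in>B (Suc n). \<exists>c\<in>B (Suc n). inf b c = bot \<and> sup b c \<le> a)"

lemma levels_of_nonatomic_probability:
  fixes \<mu> :: "'a::boolean_algebra \<Rightarrow> real"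
  assumes nontriv: "(bot::'a) \<noteq> top"
    and \<mu>: "fa_probability \<mu>" "strictly_positive \<mu>" "nonatomic \<mu>"
  shows "\<exists>B :: nat \<Rightarrow> 'a set. (\<Union>n. B n) = UNIV - {bot} \<and> (\<forall>n. B n \<subseteq> B (Suc n)) \<and>
           (\<forall>n. ereal ((1/2) ^ n) \<le> int_num (B n)) \<and> splitting_levels B"
proof (intro exI conjI allI)
  define B where "B n = {a. (1/2::real) ^ n < \<mu> a}" for n
  have fa: "fa_measure \<mu>" using \<mu>(1) unfolding fa_probability_def by simp
  have "0 < \<mu> a \<longleftrightarrow> (\<exists>n. (1/2::real) ^ n < \<mu> a)" for a
  proof
    assume "0 < \<mu> a"
    then show "\<exists>n. (1/2::real) ^ n < \<mu> a" using real_arch_pow_inv[of "\<mu> a" "1/2"] by simp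
  next
    assume "\<exists>n. (1/2::real) ^ n < \<mu> a"
    then obtain n where "(1/2::real) ^ n < \<mu> a" by blast
    moreover have "(0::real) < (1/2) ^ n" by simp
    ultimately show "0 < \<mu> a" by linarith
  qed
  then show "(\<Union>n. B n) = UNIV - {bot}"
    using \<mu>(2) fa_measure_bot[OF fa] unfolding B_def strictly_positive_def by auto
  show "B n \<subseteq> B (Suc n)" for n
  proof
    fix a assume "a \<in> B n"
    moreover have "(1/2::real) ^ Suc n \<le> (1/2) ^ n" by (rule power_decreasing) auto
    ultimately show "a \<in> B (Suc n)" unfolding B_def mem_Collect_eq by linarith
  qed
  show "ereal ((1/2) ^ n) \<le> int_num (B n)" for n
  proof (intro int_num_ge)
    show "int_good ((1/2) ^ n) (B n)"
      by (rule int_good_subset[OF int_good_superlevel[OF \<mu>(1) nontriv]]) (auto simp: B_def)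
  qed simp
  show "splitting_levels B"
    unfolding splitting_levels_def
  proof (intro allI ballI)
    fix n a assume "a \<in> B n"
    then have "2 * (1/2) ^ Suc n < \<mu> a" by (simp add: B_def)
    then obtain b c where "inf b c = bot" "sup b c \<le> a" "(1/2) ^ Suc n < \<mu> b" "(1/2) ^ Suc n < \<mu> c"
      using nonatomic_fa_measure_halving[OF fa \<mu>(3), of "(1/2) ^ Suc n" a] by auto
    then show "\<exists>b\<in>B (Suc n). \<exists>c\<in>B (Suc n). inf b c = bot \<and> sup b c \<le> a"
      unfolding B_def by blast
  qed
qed

section \<open>Ultrafilters\<close>

definition proper_filter :: "'a::boolean_algebra set \<Rightarrow> bool" where
  "proper_filter F \<longleftrightarrow> bot \<notin> F \<and> top \<in> F \<and> (\<forall>x y. x \<in> F \<longrightarrow> x \<le> y \<longrightarrow> y \<in> F) \<and>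
     (\<forall>x y. x \<in> F \<longrightarrow> y \<in> F \<longrightarrow> inf x y \<in> F)"

definition ultrafilter :: "'a::boolean_algebra set \<Rightarrow> bool" where
  "ultrafilter U \<longleftrightarrow> proper_filter U \<and> (\<forall>x. x \<in> U \<or> - x \<in> U)"

lemma proper_filterI:
  assumes "bot \<notin> F" "top \<in> F" "\<And>x y. x \<in> F \<Longrightarrow> x \<le> y \<Longrightarrow> y \<in> F"
    "\<And>x y. x \<in> F \<Longrightarrow> y \<in> F \<Longrightarrow> inf x y \<in> F"
  shows "proper_filter F"
  using assms unfolding proper_filter_def by blast

lemma proper_filterD:
  assumes "proper_filter F"
  shows "bot \<notin> F" "top \<in> F" "x \<in> F \<Longrightarrow> x \<le> y \<Longrightarrow> y \<in> F"
    "x \<in> F \<Longrightarrow> y \<in> F \<Longrightarrow> inf x y \<in> F"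
  using assms unfolding proper_filter_def by blast+

lemma proper_filter_Union_chain:
  assumes "C \<in> chains {G. proper_filter G \<and> F \<subseteq> G}" "C \<noteq> {}"
  shows "proper_filter (\<Union>C)"
proof (rule proper_filterI)
  have C: "\<And>G. G \<in> C \<Longrightarrow> proper_filter G" and ch: "\<forall>X\<in>C. \<forall>Y\<in>C. X \<subseteq> Y \<or> Y \<subseteq> X"
    using assms(1) unfolding chains_def chain_subset_def by auto
  show "bot \<notin> \<Union>C" using C proper_filterD(1) by blast
  show "top \<in> \<Union>C" using C proper_filterD(2) assms(2) by blast
  show "y \<in> \<Union>C" if "x \<in> \<Union>C" "x \<le> y" for x y using C proper_filterD(3) that by blast
  show "inf x y \<in> \<Union>C" if xy: "x \<in> \<Union>C" "y \<in> \<Union>C" for x y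
  proof -
    obtain X Y where XY: "X \<in> C" "Y \<in> C" "x \<in> X" "y \<in> Y" using xy by blast
    have "sup X Y \<in> C" using ch XY(1,2) by (metis sup.absorb1 sup.absorb2)
    then show ?thesis using C proper_filterD(4) XY(3,4) by blast
  qed
qed

lemma maximal_proper_filter_ultrafilter:
  assumes M: "proper_filter M" and max: "\<And>G. proper_filter G \<Longrightarrow> M \<subseteq> G \<Longrightarrow> G = M"
  shows "ultrafilter M"
  unfolding ultrafilter_def
proof (intro conjI allI M)
  fix x
  show "x \<in> M \<or> - x \<in> M"
  proof (rule ccontr)
    assume nx: "\<not> (x \<in> M \<or> - x \<in> M)"
    define G where "G = {y. \<exists>m\<in>M. inf m x \<le> y}"
    have "proper_filter G"
    proof (rule proper_filterI)
      show "bot \<notin> G"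
      proof
        assume "bot \<in> G"
        then obtain m where "m \<in> M" "inf m x = bot" unfolding G_def by (auto simp: bot_unique)
        then have "- x \<in> M" using proper_filterD(3)[OF M] by (simp add: inf_shunt)
        then show False using nx by blast
      qed
      show "top \<in> G" using proper_filterD(2)[OF M] unfolding G_def by auto
      show "z \<in> G" if "y \<in> G" "y \<le> z" for y z
        using that unfolding G_def by (blast intro: order_trans)
      show "inf y z \<in> G" if yz: "y \<in> G" "z \<in> G" for y z
      proof -
        obtain m1 m2 where m: "m1 \<in> M" "inf m1 x \<le> y" "m2 \<in> M" "inf m2 x \<le> z"
          using yz unfolding G_def by blast
        then have "inf (inf m1 m2) x \<le> inf y z"
          by (meson inf_le1 inf_le2 le_inf_iff order_trans)
        then show ?thesis using proper_filterD(4)[OF M m(1,3)] unfolding G_def by blast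
      qed
    qed
    moreover have "M \<subseteq> G" unfolding G_def by (auto intro: le_infI1)
    ultimately have "G = M" using max by blast
    moreover have "x \<in> G" using proper_filterD(2)[OF M] unfolding G_def by auto
    ultimately show False using nx by blast
  qed
qed

lemma proper_filter_extends_to_ultrafilter:
  assumes "proper_filter F"
  obtains U where "ultrafilter U" "F \<subseteq> U"
proof -
  have "\<forall>C\<in>chains {G. proper_filter G \<and> F \<subseteq> G}. \<exists>U\<in>{G. proper_filter G \<and> F \<subseteq> G}. \<forall>X\<in>C. X \<subseteq> U"
  proof
    fix C assume C: "C \<in> chains {G. proper_filter G \<and> F \<subseteq> G}"
    show "\<exists>U\<in>{G. proper_filter G \<and> F \<subseteq> G}. \<forall>X\<in>C. X \<subseteq> U"
    proof (cases "C = {}")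
      case False
      then have "F \<subseteq> \<Union>C" using C unfolding chains_def by auto
      then show ?thesis using proper_filter_Union_chain[OF C False] by blast
    qed (use assms in auto)
  qed
  from Zorn_Lemma2[OF this] obtain M where M: "M \<in> {G. proper_filter G \<and> F \<subseteq> G}"
      "\<forall>G\<in>{G. proper_filter G \<and> F \<subseteq> G}. M \<subseteq> G \<longrightarrow> G = M"
    by blast
  have "ultrafilter M"
  proof (rule maximal_proper_filter_ultrafilter)
    show "proper_filter M" using M(1) by simp
    show "G = M" if "proper_filter G" "M \<subseteq> G" for G using M that by blast
  qed
  then show ?thesis using that M(1) by blast
qed

lemma ultrafilter_containing:
  assumes "t \<noteq> bot"
  obtains U where "ultrafilter U" "t \<in> U"
proof -
  have "proper_filter {y. t \<le> y}"
    using assms unfolding proper_filter_def by (auto simp: bot_unique intro: order_trans)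
  then show ?thesis using that proper_filter_extends_to_ultrafilter by blast
qed

lemma ultrafilter_avoiding:
  fixes S :: "'a::boolean_algebra set"
  assumes no_cover: "\<And>xs. set xs \<subseteq> S \<Longrightarrow> foldr sup xs bot \<noteq> top"
  obtains U where "ultrafilter U" "U \<inter> S = {}"
proof -
  define F where "F = {y. \<exists>xs. set xs \<subseteq> S \<and> - foldr sup xs bot \<le> y}"
  have "proper_filter F"
  proof (rule proper_filterI)
    show "bot \<notin> F"
    proof
      assume "bot \<in> F"
      then obtain xs where "set xs \<subseteq> S" "- foldr sup xs bot \<le> bot" unfolding F_def by blast
      then show False using no_cover by (metis compl_le_swap2 compl_bot_eq top_unique)
    qed
    show "top \<in> F" unfolding F_def by (auto intro: exI[of _ "[]"])
    show "z \<in> F" if "y \<in> F" "y \<le> z" for y z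
      using that unfolding F_def by (blast intro: order_trans)
    show "inf y z \<in> F" if yz: "y \<in> F" "z \<in> F" for y z
    proof -
      obtain xs ys where xs: "set xs \<subseteq> S" "- foldr sup xs bot \<le> y"
        and ys: "set ys \<subseteq> S" "- foldr sup ys bot \<le> z"
        using yz unfolding F_def by blast
      have "foldr sup (xs @ ys) bot = sup (foldr sup xs bot) (foldr sup ys (bot::'a))"
        by (induction xs) (auto simp: sup_assoc)
      then have "- foldr sup (xs @ ys) bot \<le> inf y z" using xs(2) ys(2) by (auto intro: le_infI1 le_infI2)
      moreover have "set (xs @ ys) \<subseteq> S" using xs(1) ys(1) by simp
      ultimately show ?thesis unfolding F_def by blast
    qed
  qed
  then obtain U where U: "ultrafilter U" "F \<subseteq> U" using proper_filter_extends_to_ultrafilter by blast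
  have "x \<notin> U" if x: "x \<in> S" for x
  proof
    assume "x \<in> U"
    moreover have "- x \<in> F" using x unfolding F_def by (auto intro!: exI[of _ "[x]"])
    ultimately have "inf x (- x) \<in> U" using U proper_filterD(4) unfolding ultrafilter_def by blast
    then show False using U(1) proper_filterD(1) unfolding ultrafilter_def by auto
  qed
  then show ?thesis using that U(1) by blast
qed

lemma ultrafilter_mono: "ultrafilter U \<Longrightarrow> x \<in> U \<Longrightarrow> x \<le> y \<Longrightarrow> y \<in> U"
  unfolding ultrafilter_def proper_filter_def by blast

lemma ultrafilter_top: "ultrafilter U \<Longrightarrow> top \<in> U"
  unfolding ultrafilter_def proper_filter_def by blast

lemma ultrafilter_disjoint: "ultrafilter U \<Longrightarrow> inf x y = bot \<Longrightarrow> x \<in> U \<Longrightarrow> y \<notin> U"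
  unfolding ultrafilter_def proper_filter_def by metis

lemma ultrafilter_sup_iff: "ultrafilter U \<Longrightarrow> sup x y \<in> U \<longleftrightarrow> x \<in> U \<or> y \<in> U"
  unfolding ultrafilter_def proper_filter_def
  by (metis compl_inf_bot compl_sup inf_compl_bot_right sup_ge1 sup_ge2)

lemma ultrafilter_disjoint_list:
  "ultrafilter U \<Longrightarrow> disjoint_list ps \<Longrightarrow> length (filter (\<lambda>p. p \<in> U) ps) \<le> 1"
  by (induction ps) (auto simp: filter_empty_conv dest: ultrafilter_disjoint)

definition ultrafilter_measure :: "'a::boolean_algebra set \<Rightarrow> 'a \<Rightarrow> real" where
  "ultrafilter_measure U x = (if x \<in> U then 1 else 0)"

lemma fa_probability_ultrafilter_measure: "ultrafilter U \<Longrightarrow> fa_probability (ultrafilter_measure U)"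
  unfolding fa_probability_def fa_measure_def ultrafilter_measure_def
  using ultrafilter_sup_iff ultrafilter_disjoint ultrafilter_top by fastforce

section \<open>A minimax lemma for affine functions\<close>

definition mix_closed :: "(real \<Rightarrow> 'b \<Rightarrow> 'b \<Rightarrow> 'b) \<Rightarrow> 'b set \<Rightarrow> bool" where
  "mix_closed mix K \<longleftrightarrow> (\<forall>s x y. 0 \<le> s \<longrightarrow> s \<le> 1 \<longrightarrow> x \<in> K \<longrightarrow> y \<in> K \<longrightarrow> mix s x y \<in> K)"

definition mix_affine :: "(real \<Rightarrow> 'b \<Rightarrow> 'b \<Rightarrow> 'b) \<Rightarrow> 'b set \<Rightarrow> ('b \<Rightarrow> real) \<Rightarrow> bool" where
  "mix_affine mix K f \<longleftrightarrow>
     (\<forall>s x y. 0 \<le> s \<longrightarrow> s \<le> 1 \<longrightarrow> x \<in> K \<longrightarrow> y \<in> K \<longrightarrow> f (mix s x y) = (1 - s) * f x + s * f y)"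

definition weighted_averages_reach :: "real \<Rightarrow> 'b set \<Rightarrow> ('i \<Rightarrow> 'b \<Rightarrow> real) \<Rightarrow> 'i set \<Rightarrow> bool" where
  "weighted_averages_reach \<delta> K h I \<longleftrightarrow>
     (\<forall>c :: 'i \<Rightarrow> nat. 0 < sum c I \<longrightarrow>
        (\<exists>\<nu>\<in>K. \<delta> * real (sum c I) \<le> (\<Sum>i\<in>I. real (c i) * h i \<nu>)))"

lemma mix_closedD: "mix_closed mix K \<Longrightarrow> 0 \<le> s \<Longrightarrow> s \<le> 1 \<Longrightarrow> x \<in> K \<Longrightarrow> y \<in> K \<Longrightarrow> mix s x y \<in> K"
  unfolding mix_closed_def by blast

lemma mix_affineD:
  "mix_affine mix K f \<Longrightarrow> 0 \<le> s \<Longrightarrow> s \<le> 1 \<Longrightarrow> x \<in> K \<Longrightarrow> y \<in> K \<Longrightarrow>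
    f (mix s x y) = (1 - s) * f x + s * f y"
  unfolding mix_affine_def by blast

lemma mix_affine_subset: "mix_affine mix K f \<Longrightarrow> K' \<subseteq> K \<Longrightarrow> mix_affine mix K' f"
  unfolding mix_affine_def by blast

lemma segment_same_side:
  fixes u0 u1 v0 v1 d :: real
  assumes "u1 < d" "d \<le> u0" "v0 < d" "d \<le> v1"
  shows "\<exists>s. 0 \<le> s \<and> s \<le> 1 \<and> (d \<le> u0 + s * (u1 - u0) \<longleftrightarrow> d \<le> v0 + s * (v1 - v0))"
proof -
  define su where "su = (u0 - d) / (u0 - u1)"
  define sv where "sv = (d - v0) / (v1 - v0)"
  have su: "0 \<le> su" "su < 1" "u0 + su * (u1 - u0) = d"
    using assms unfolding su_def by (auto simp: field_simps)
  have sv: "sv \<le> 1" "v0 + sv * (v1 - v0) = d"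
    using assms unfolding sv_def by (auto simp: field_simps)
  show ?thesis
  proof (cases "d \<le> v0 + su * (v1 - v0)")
    case True
    then show ?thesis using su by (intro exI[of _ su]) auto
  next
    case False
    have "su < sv"
    proof (rule ccontr)
      assume "\<not> su < sv"
      then have "sv * (v1 - v0) \<le> su * (v1 - v0)" using assms by (intro mult_right_mono) auto
      then show False using False sv(2) by linarith
    qed
    define s where "s = (su + sv) / 2"
    have "s * (u1 - u0) < su * (u1 - u0)" "s * (v1 - v0) < sv * (v1 - v0)"
      using \<open>su < sv\<close> assms unfolding s_def
      by (auto intro: mult_strict_right_mono_neg mult_strict_right_mono)
    then have "u0 + s * (u1 - u0) < d" "v0 + s * (v1 - v0) < d" using su(3) sv(2) by linarith+
    moreover have "0 \<le> s" "s \<le> 1" using su sv(1) \<open>su < sv\<close> by (simp_all add: s_def)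
    ultimately show ?thesis by (intro exI[of _ s]) auto
  qed
qed

lemma affine_pair_no_switch:
  assumes mix: "mix_closed mix K" and g: "mix_affine mix K g" and h: "mix_affine mix K h"
    and none: "\<And>\<nu>. \<nu> \<in> K \<Longrightarrow> \<not> (\<delta> \<le> g \<nu> \<and> \<delta> \<le> h \<nu>)"
    and t: "0 \<le> t" "t \<le> 1" and "\<delta> < \<theta>"
    and x: "x \<in> K" "\<theta> \<le> (1 - t) * g x + t * h x" "\<delta> \<le> g x"
    and y: "y \<in> K" "\<theta> \<le> (1 - t) * g y + t * h y"
  shows "\<delta> \<le> g y"
proof (rule ccontr)
  assume gy: "\<not> \<delta> \<le> g y"
  have hx: "h x < \<delta>" using none[OF x(1)] x(3) by auto
  have "\<not> h y \<le> \<delta>"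
    using convex_bound_le[of "g y" \<delta> "h y" "1 - t" t] gy y(2) t \<open>\<delta> < \<theta>\<close> by auto
  then obtain s where s: "0 \<le> s" "s \<le> 1"
      "\<delta> \<le> g x + s * (g y - g x) \<longleftrightarrow> \<delta> \<le> h x + s * (h y - h x)"
    using segment_same_side[of "g y" \<delta> "g x" "h x" "h y"] gy x(3) hx by auto
  define z where "z = mix s x y"
  have z: "z \<in> K" using mix_closedD[OF mix s(1,2) x(1) y(1)] by (simp add: z_def)
  have gz: "g z = g x + s * (g y - g x)" and hz: "h z = h x + s * (h y - h x)"
    using mix_affineD[OF g s(1,2) x(1) y(1)] mix_affineD[OF h s(1,2) x(1) y(1)]
    by (simp_all add: z_def algebra_simps)
  have "(1 - t) * g z + t * h z = (1 - s) * ((1 - t) * g x + t * h x) + s * ((1 - t) * g y + t * h y)"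
    unfolding gz hz by (simp add: algebra_simps)
  also have "\<dots> \<ge> \<theta>"
    using convex_bound_le[of "-((1 - t) * g x + t * h x)" "-\<theta>" "-((1 - t) * g y + t * h y)" "1 - s" s]
      x(2) y(2) s(1,2) by (simp add: algebra_simps)
  finally have "\<theta> \<le> (1 - t) * g z + t * h z" .
  then have "\<delta> \<le> g z \<or> \<delta> \<le> h z"
    using convex_bound_le[of "g z" \<delta> "h z" "1 - t" t] t \<open>\<delta> < \<theta>\<close> by force
  then show False using none[OF z] s(3) gz hz by auto
qed

text \<open>Walking along the grid \<open>t = j / N\<close>, consecutive witnesses stay on the side \<open>\<delta>' \<le> g\<close> by the
  previous lemma, and at \<open>t = 1\<close> the witness also has \<open>\<delta>' \<le> h\<close>.\<close>
lemma affine_pair_minimax: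
  assumes mix: "mix_closed mix K" and g: "mix_affine mix K g" and h: "mix_affine mix K h"
    and bounds: "\<And>\<nu>. \<nu> \<in> K \<Longrightarrow> 0 \<le> g \<nu> \<and> h \<nu> \<le> 1"
    and grid: "\<And>j N. 0 < N \<Longrightarrow> j \<le> N \<Longrightarrow>
      \<exists>\<nu>\<in>K. \<delta> \<le> (1 - real j / real N) * g \<nu> + (real j / real N) * h \<nu>"
    and "\<delta>' < \<delta>"
  shows "\<exists>\<nu>\<in>K. \<delta>' \<le> g \<nu> \<and> \<delta>' \<le> h \<nu>"
proof (rule ccontr)
  assume "\<not> ?thesis"
  then have none: "\<And>\<nu>. \<nu> \<in> K \<Longrightarrow> \<not> (\<delta>' \<le> g \<nu> \<and> \<delta>' \<le> h \<nu>)" by blast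
  define f where "f t \<nu> = (1 - t) * g \<nu> + t * h \<nu>" for t \<nu>
  obtain N :: nat where N: "inverse (real N) < \<delta> - \<delta>'" "0 < N"
    using \<open>\<delta>' < \<delta>\<close> ex_inverse_of_nat_less[of "\<delta> - \<delta>'"] by auto
  have "\<forall>j\<in>{..N}. \<exists>\<nu>. \<nu> \<in> K \<and> \<delta> \<le> f (j / N) \<nu>"
    using grid[OF N(2)] unfolding f_def by auto
  then obtain \<nu> where \<nu>: "\<And>j. j \<le> N \<Longrightarrow> \<nu> j \<in> K \<and> \<delta> \<le> f (j / N) (\<nu> j)"
    using bchoice[of "{..N}"] by (metis atMost_iff)
  have "\<delta>' \<le> g (\<nu> j)" if "j \<le> N" for j
    using that
  proof (induction j)
    case 0
    then show ?case using \<nu>[of 0] \<open>\<delta>' < \<delta>\<close> unfolding f_def by simp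
  next
    case (Suc j)
    define t where "t = real j / real N"
    have t: "0 \<le> t" "t \<le> 1" using Suc.prems N(2) by (auto simp: t_def field_simps)
    have x: "\<nu> j \<in> K" "\<delta> \<le> f t (\<nu> j)" using \<nu>[of j] Suc.prems by (auto simp: t_def)
    have y: "\<nu> (Suc j) \<in> K" "\<delta> \<le> f (t + inverse N) (\<nu> (Suc j))"
      using \<nu>[OF Suc.prems] N(2) by (auto simp: t_def add_divide_distrib divide_inverse distrib_right add.commute)
    have "inverse N * h (\<nu> (Suc j)) \<le> inverse N * (1 + g (\<nu> (Suc j)))"
      using bounds[OF y(1)] by (intro mult_left_mono) auto
    then have "f (t + inverse N) (\<nu> (Suc j)) \<le> f t (\<nu> (Suc j)) + inverse N"
      unfolding f_def by (simp add: algebra_simps)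
    then have "\<delta> - inverse N \<le> f t (\<nu> (Suc j))" using y(2) by linarith
    moreover have "\<delta> - inverse N \<le> f t (\<nu> j)"
      using x(2) inverse_nonnegative_iff_nonnegative[of "real N"] by linarith
    ultimately show ?case
      using affine_pair_no_switch[OF mix g h none t, of "\<delta> - inverse N" "\<nu> j" "\<nu> (Suc j)"]
        x(1) y(1) N(1) Suc.IH Suc.prems unfolding f_def by simp
  qed
  then show False using none[of "\<nu> N"] \<nu>[of N] N(2) \<open>\<delta>' < \<delta>\<close> unfolding f_def by auto
qed

lemma mix_affine_weighted_average:
  assumes "\<forall>i\<in>I. mix_affine mix K (h i)"
  shows "mix_affine mix K (\<lambda>\<nu>. (\<Sum>i\<in>I. w i * h i \<nu>) / S)"
  unfolding mix_affine_def
proof (intro allI impI)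
  fix s :: real and x y assume sxy: "0 \<le> s" "s \<le> 1" "x \<in> K" "y \<in> K"
  have "(\<Sum>i\<in>I. w i * h i (mix s x y)) = (1 - s) * (\<Sum>i\<in>I. w i * h i x) + s * (\<Sum>i\<in>I. w i * h i y)"
    unfolding sum_distrib_left sum.distrib[symmetric]
  proof (intro sum.cong refl)
    fix i assume "i \<in> I"
    then have eq: "h i (mix s x y) = (1 - s) * h i x + s * h i y" using assms mix_affineD[OF _ sxy] by blast
    show "w i * h i (mix s x y) = (1 - s) * (w i * h i x) + s * (w i * h i y)"
      unfolding eq by (simp add: algebra_simps)
  qed
  then show "(\<Sum>i\<in>I. w i * h i (mix s x y)) / S = (1 - s) * ((\<Sum>i\<in>I. w i * h i x) / S) + s * ((\<Sum>i\<in>I. w i * h i y) / S)"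
    by (simp add: add_divide_distrib)
qed

text \<open>Weighting \<open>j\<close> by \<open>k\<close> and the weighted average of the other functions by \<open>N - k\<close> exhibits
  the convex combinations needed in the pair minimax lemma.\<close>
lemma weighted_averages_reach_insert_grid:
  fixes h :: "'i \<Rightarrow> 'b \<Rightarrow> real" and c :: "'i \<Rightarrow> nat"
  assumes I: "finite I" "j \<notin> I" and reach: "weighted_averages_reach \<delta> K h (insert j I)"
    and c: "0 < sum c I" and N: "0 < N" "k \<le> N"
  shows "\<exists>\<nu>\<in>K. \<delta> \<le> (1 - real k / real N) * ((\<Sum>i\<in>I. c i * h i \<nu>) / sum c I) +
    (real k / real N) * h j \<nu>"
proof -
  define S where "S = real (sum c I)"
  have S: "0 < S" using c unfolding S_def by (simp only: of_nat_0_less_iff)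
  define c' where "c' i = (if i = j then k * sum c I else (N - k) * c i)" for i
  have c'_I: "(\<Sum>i\<in>I. f i * c' i) = (N - k) * (\<Sum>i\<in>I. f i * c i)" for f :: "'i \<Rightarrow> real"
    unfolding sum_distrib_left using I(2) by (intro sum.cong refl) (auto simp: c'_def)
  have "(\<Sum>i\<in>I. c' i) = (N - k) * sum c I"
    unfolding sum_distrib_left using I(2) by (intro sum.cong refl) (auto simp: c'_def)
  then have "(\<Sum>i\<in>insert j I. c' i) = k * sum c I + (N - k) * sum c I"
    unfolding sum.insert[OF I] by (simp add: c'_def)
  also have "\<dots> = N * sum c I" using N(2) by (simp add: add_mult_distrib[symmetric])
  finally have sum_c': "real (\<Sum>i\<in>insert j I. c' i) = real N * S" by (simp add: S_def)
  have "0 < real (\<Sum>i\<in>insert j I. c' i)" unfolding sum_c' using N(1) S by simp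
  then have "0 < (\<Sum>i\<in>insert j I. c' i)" by (simp only: of_nat_0_less_iff)
  then obtain \<nu> where \<nu>: "\<nu> \<in> K" "\<delta> * (real N * S) \<le> (\<Sum>i\<in>insert j I. c' i * h i \<nu>)"
    using reach unfolding weighted_averages_reach_def sum_c'[symmetric] by blast
  have "(\<Sum>i\<in>insert j I. c' i * h i \<nu>) = real k * S * h j \<nu> + real (N - k) * (\<Sum>i\<in>I. c i * h i \<nu>)"
    using c'_I[of "\<lambda>i. h i \<nu>"] I by (simp add: c'_def S_def mult.commute)
  then have "(\<delta> * real N) * S \<le> (real k * h j \<nu> + real (N - k) * ((\<Sum>i\<in>I. c i * h i \<nu>) / S)) * S"
    using \<nu>(2) S by (simp add: algebra_simps)
  then have "\<delta> * real N \<le> real k * h j \<nu> + real (N - k) * ((\<Sum>i\<in>I. c i * h i \<nu>) / S)" using S by simp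
  then show ?thesis
    using \<nu>(1) N S unfolding S_def[symmetric] by (intro bexI[of _ \<nu>]) (simp_all add: field_simps of_nat_diff)
qed

lemma weighted_averages_reach_restrict:
  fixes h :: "'i \<Rightarrow> 'b \<Rightarrow> real"
  assumes mix: "mix_closed mix K"
    and aff: "\<forall>i\<in>insert j I. mix_affine mix K (h i)"
    and bounds: "\<forall>i\<in>insert j I. \<forall>\<nu>\<in>K. 0 \<le> h i \<nu> \<and> h i \<nu> \<le> 1"
    and I: "finite I" "j \<notin> I"
    and reach: "weighted_averages_reach \<delta> K h (insert j I)"
    and "\<delta>' < \<delta>"
  shows "weighted_averages_reach \<delta>' {\<nu>\<in>K. \<delta>' \<le> h j \<nu>} h I"
  unfolding weighted_averages_reach_def
proof (intro allI impI)
  fix c :: "'i \<Rightarrow> nat" assume c: "0 < sum c I"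
  define S where "S = real (sum c I)"
  have S: "0 < S" using c unfolding S_def by (simp only: of_nat_0_less_iff)
  define g where "g \<nu> = (\<Sum>i\<in>I. c i * h i \<nu>) / S" for \<nu>
  have g_bounds: "0 \<le> g \<nu> \<and> g \<nu> \<le> 1" if "\<nu> \<in> K" for \<nu>
  proof -
    have "0 \<le> (\<Sum>i\<in>I. c i * h i \<nu>)" using bounds that by (intro sum_nonneg) simp
    moreover have "(\<Sum>i\<in>I. c i * h i \<nu>) \<le> S"
      unfolding S_def of_nat_sum using bounds that by (intro sum_mono) (simp add: mult_left_le)
    ultimately show ?thesis using S unfolding g_def by simp
  qed
  have "mix_affine mix K g"
    unfolding g_def[abs_def] by (rule mix_affine_weighted_average) (use aff in blast)
  moreover have "\<exists>\<nu>\<in>K. \<delta> \<le> (1 - real k / real N) * g \<nu> + (real k / real N) * h j \<nu>"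
    if "0 < N" "k \<le> N" for k N
    unfolding g_def S_def by (rule weighted_averages_reach_insert_grid[OF I reach c that])
  ultimately obtain \<nu> where "\<nu> \<in> K" "\<delta>' \<le> g \<nu>" "\<delta>' \<le> h j \<nu>"
    using affine_pair_minimax[OF mix, of g "h j" \<delta> \<delta>'] \<open>\<delta>' < \<delta>\<close> aff bounds g_bounds by auto
  moreover have "\<delta>' * S \<le> (\<Sum>i\<in>I. c i * h i \<nu>)"
    using \<open>\<delta>' \<le> g \<nu>\<close> S unfolding g_def by (simp add: field_simps)
  ultimately show "\<exists>\<nu>\<in>{\<nu> \<in> K. \<delta>' \<le> h j \<nu>}. \<delta>' * real (sum c I) \<le> (\<Sum>i\<in>I. c i * h i \<nu>)"
    unfolding S_def by auto
qed

text \<open>Induction on \<open>I\<close>: one function at a time is kept above a level between \<open>\<delta>'\<close> and \<open>\<delta>\<close>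
  by passing to the convex subset where it is that large.\<close>
lemma affine_minimax:
  fixes h :: "'i \<Rightarrow> 'b \<Rightarrow> real"
  assumes "finite I" and mix: "mix_closed mix K"
    and aff: "\<forall>i\<in>I. mix_affine mix K (h i)"
    and bounds: "\<forall>i\<in>I. \<forall>\<nu>\<in>K. 0 \<le> h i \<nu> \<and> h i \<nu> \<le> 1"
    and "K \<noteq> {}" and "weighted_averages_reach \<delta> K h I" and "\<delta>' < \<delta>"
  shows "\<exists>\<nu>\<in>K. \<forall>i\<in>I. \<delta>' \<le> h i \<nu>"
  using assms
proof (induction I arbitrary: K \<delta> rule: finite_induct)
  case empty
  then show ?case by auto
next
  case (insert j I)
  define \<delta>1 where "\<delta>1 = (\<delta> + \<delta>') / 2"
  have \<delta>1: "\<delta>' < \<delta>1" "\<delta>1 < \<delta>" using insert.prems(6) by (auto simp: \<delta>1_def)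
  define K' where "K' = {\<nu>\<in>K. \<delta>1 \<le> h j \<nu>}"
  define c :: "'i \<Rightarrow> nat" where "c i = (if i = j then 1 else 0)" for i
  have "\<forall>i\<in>I. c i = 0" using insert.hyps(2) by (auto simp: c_def)
  then have "sum c (insert j I) = 1" "(\<Sum>i\<in>insert j I. real (c i) * h i \<nu>) = h j \<nu>" for \<nu>
    using insert.hyps by (simp_all add: c_def)
  then have "\<exists>\<nu>\<in>K. \<delta> \<le> h j \<nu>"
    using insert.prems(5) unfolding weighted_averages_reach_def by (metis mult.right_neutral of_nat_1 zero_less_one)
  then have "K' \<noteq> {}" using \<delta>1 unfolding K'_def by force
  moreover have "mix_closed mix K'"
    unfolding mix_closed_def K'_def
  proof (intro allI impI CollectI conjI; elim CollectE conjE)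
    fix s :: real and x y assume sxy: "0 \<le> s" "s \<le> 1" "x \<in> K" "y \<in> K" "\<delta>1 \<le> h j x" "\<delta>1 \<le> h j y"
    show "mix s x y \<in> K" using mix_closedD[OF insert.prems(1) sxy(1-4)] .
    have "h j (mix s x y) = (1 - s) * h j x + s * h j y"
      using mix_affineD[OF _ sxy(1-4)] insert.prems(2) by blast
    then show "\<delta>1 \<le> h j (mix s x y)"
      using convex_bound_le[of "- h j x" "- \<delta>1" "- h j y" "1 - s" s] sxy by simp
  qed
  moreover have "weighted_averages_reach \<delta>1 K' h I"
    unfolding K'_def by (rule weighted_averages_reach_restrict) (use insert \<delta>1 in auto)
  moreover have "\<forall>i\<in>I. mix_affine mix K' (h i)"
    using insert.prems(2) mix_affine_subset[of mix K _ K'] by (auto simp: K'_def)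
  moreover have "\<forall>i\<in>I. \<forall>\<nu>\<in>K'. 0 \<le> h i \<nu> \<and> h i \<nu> \<le> 1"
    using insert.prems(3) by (auto simp: K'_def)
  ultimately obtain \<nu> where "\<nu> \<in> K'" "\<forall>i\<in>I. \<delta>' \<le> h i \<nu>"
    using insert.IH[of K' \<delta>1] \<delta>1(1) by blast
  then show ?case using \<delta>1 unfolding K'_def by (auto intro!: bexI[of _ \<nu>])
qed

section \<open>Kelley's criterion for finite families\<close>

lemma fa_probability_bounds: "fa_probability \<nu> \<Longrightarrow> 0 \<le> \<nu> x \<and> \<nu> x \<le> 1"
  unfolding fa_probability_def using fa_measure_nonneg fa_measure_le_top by metis

lemma fa_probability_mix:
  assumes "fa_probability \<mu>" "fa_probability \<nu>" "0 \<le> s" "s \<le> 1"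
  shows "fa_probability (\<lambda>x. (1 - s) * \<mu> x + s * \<nu> x)"
proof -
  have m: "fa_measure \<mu>" "fa_measure \<nu>" "\<mu> top = 1" "\<nu> top = 1"
    using assms(1,2) unfolding fa_probability_def by auto
  show ?thesis
    unfolding fa_probability_def fa_measure_def
  proof (intro conjI allI impI)
    show "0 \<le> (1 - s) * \<mu> a + s * \<nu> a" for a
      using fa_measure_nonneg[OF m(1)] fa_measure_nonneg[OF m(2)] assms(3,4) by simp
    show "(1 - s) * \<mu> (sup a b) + s * \<nu> (sup a b) = (1 - s) * \<mu> a + s * \<nu> a + ((1 - s) * \<mu> b + s * \<nu> b)"
      if "inf a b = bot" for a b
      using fa_measure_add[OF m(1) that] fa_measure_add[OF m(2) that] by (simp add: algebra_simps)
  qed (simp add: m)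
qed

lemma length_concat_replicate: "length (concat (map (\<lambda>x. replicate (c x) x) L)) = (\<Sum>x\<leftarrow>L. c x)"
  by (induction L) simp_all

lemma length_filter_concat_replicate:
  "length (filter P (concat (map (\<lambda>x. replicate (c x) x) L))) = (\<Sum>x\<leftarrow>L. if P x then c x else 0)"
  by (induction L) simp_all

lemma weighted_averages_reach_ultrafilter_measures:
  fixes F :: "'a::boolean_algebra set"
  assumes good: "int_good \<alpha> F" and X: "finite X" "X \<subseteq> F"
  shows "weighted_averages_reach \<alpha> {\<nu>. fa_probability \<nu>} (\<lambda>x \<nu>. \<nu> x) X"
  unfolding weighted_averages_reach_def
proof (intro allI impI)
  fix c :: "'a \<Rightarrow> nat" assume "0 < sum c X"
  obtain L where L: "set L = X" "distinct L" using finite_distinct_list[OF X(1)] by blast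
  define ys where "ys = concat (map (\<lambda>x. replicate (c x) x) L)"
  have len: "length ys = sum c X"
    using L by (simp add: ys_def length_concat_replicate sum_list_distinct_conv_sum_set)
  have "set ys \<subseteq> F" using L X(2) by (auto simp: ys_def)
  then obtain J where J: "J \<subseteq> {..<length ys}" "\<alpha> * real (length ys) \<le> real (card J)"
      "meet_idx ys J \<noteq> bot"
    using good unfolding int_good_def by blast
  obtain U where U: "ultrafilter U" "meet_idx ys J \<in> U" using ultrafilter_containing[OF J(3)] by blast
  have "J \<subseteq> {i. i < length ys \<and> ys ! i \<in> U}"
    using J(1) U meet_idx_lower[OF finite_subset[OF J(1)]] ultrafilter_mono by blast
  then have "card J \<le> length (filter (\<lambda>y. y \<in> U) ys)"
    unfolding length_filter_conv_card by (intro card_mono) auto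
  also have "\<dots> = (\<Sum>x\<in>X. if x \<in> U then c x else 0)"
    using L by (simp add: ys_def length_filter_concat_replicate sum_list_distinct_conv_sum_set)
  finally have "real (card J) \<le> real (\<Sum>x\<in>X. if x \<in> U then c x else 0)" by (simp only: of_nat_le_iff)
  moreover have "real (\<Sum>x\<in>X. if x \<in> U then c x else 0) = (\<Sum>x\<in>X. real (c x) * ultrafilter_measure U x)"
    unfolding of_nat_sum ultrafilter_measure_def by (intro sum.cong) auto
  ultimately have "\<alpha> * real (sum c X) \<le> (\<Sum>x\<in>X. real (c x) * ultrafilter_measure U x)"
    using J(2) unfolding len by linarith
  moreover have "fa_probability (ultrafilter_measure U)" by (rule fa_probability_ultrafilter_measure[OF U(1)])
  ultimately show "\<exists>\<nu>\<in>{\<nu>. fa_probability \<nu>}. \<alpha> * real (sum c X) \<le> (\<Sum>x\<in>X. real (c x) * \<nu> x)"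
    by blast
qed

lemma int_good_imp_fa_probability_above:
  fixes F :: "'a::boolean_algebra set"
  assumes nontriv: "(bot::'a) \<noteq> top" and good: "int_good \<alpha> F" and X: "finite X" "X \<subseteq> F"
    and "\<delta> < \<alpha>"
  obtains \<nu> where "fa_probability \<nu>" "\<forall>x\<in>X. \<delta> \<le> \<nu> x"
proof -
  define mix where "mix s \<mu> \<nu> = (\<lambda>x::'a. (1 - s) * \<mu> x + s * \<nu> x)" for s :: real and \<mu> \<nu>
  have "mix_closed mix {\<nu>. fa_probability \<nu>}"
    unfolding mix_closed_def mix_def by (simp add: fa_probability_mix)
  moreover have "\<forall>x\<in>X. mix_affine mix {\<nu>. fa_probability \<nu>} (\<lambda>\<nu>. \<nu> x)"
    unfolding mix_affine_def mix_def by simp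
  moreover have "\<forall>x\<in>X. \<forall>\<nu>\<in>{\<nu>. fa_probability \<nu>}. 0 \<le> \<nu> x \<and> \<nu> x \<le> 1"
    using fa_probability_bounds by blast
  moreover have "{\<nu> :: 'a \<Rightarrow> real. fa_probability \<nu>} \<noteq> {}"
  proof -
    obtain U :: "'a set" where "ultrafilter U" using ultrafilter_containing[OF nontriv[symmetric]] by blast
    then show ?thesis using fa_probability_ultrafilter_measure by blast
  qed
  ultimately have "\<exists>\<nu>\<in>{\<nu>. fa_probability \<nu>}. \<forall>x\<in>X. \<delta> \<le> \<nu> x"
    using weighted_averages_reach_ultrafilter_measures[OF good X] \<open>\<delta> < \<alpha>\<close>
    by (rule affine_minimax[OF X(1), where h = "\<lambda>x \<nu>. \<nu> x"])
  then show ?thesis using that by blast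
qed

section \<open>Splitting levels yield a nonatomic probability\<close>

lemma splitting_levels_refinement:
  assumes split: "splitting_levels B" and "a \<in> B n"
  shows "\<exists>ps. length ps = 2 ^ k \<and> set ps \<subseteq> B (n + k) \<and> disjoint_list ps \<and> (\<forall>p\<in>set ps. p \<le> a)"
  using \<open>a \<in> B n\<close>
proof (induction k arbitrary: n a)
  case 0
  then show ?case by (intro exI[of _ "[a]"]) simp
next
  case (Suc k)
  obtain b c where bc: "b \<in> B (Suc n)" "c \<in> B (Suc n)" "inf b c = bot" "sup b c \<le> a"
    using split Suc.prems unfolding splitting_levels_def by blast
  obtain ps where ps: "length ps = 2 ^ k" "set ps \<subseteq> B (Suc n + k)" "disjoint_list ps" "\<forall>p\<in>set ps. p \<le> b"
    using Suc.IH[OF bc(1)] by blast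
  obtain qs where qs: "length qs = 2 ^ k" "set qs \<subseteq> B (Suc n + k)" "disjoint_list qs" "\<forall>q\<in>set qs. q \<le> c"
    using Suc.IH[OF bc(2)] by blast
  have "inf p q = bot" if "p \<in> set ps" "q \<in> set qs" for p q
    using inf_mono[of p b q c] ps(4) qs(4) bc(3) that by (simp add: bot_unique)
  moreover have "p \<le> a" if "p \<in> set (ps @ qs)" for p
    using ps(4) qs(4) bc(4) that by (auto intro: order_trans le_supI1 le_supI2)
  ultimately show ?case
    using ps qs by (intro exI[of _ "ps @ qs"]) (auto simp: sorted_wrt_append)
qed

lemma fa_measure_scale: "fa_measure \<mu> \<Longrightarrow> 0 \<le> c \<Longrightarrow> fa_measure (\<lambda>x. c * \<mu> x)"
  unfolding fa_measure_def by (simp add: distrib_left)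

definition level_bounded :: "(nat \<Rightarrow> 'a set) \<Rightarrow> ('a \<Rightarrow> real) \<Rightarrow> bool" where
  "level_bounded B \<nu> \<longleftrightarrow> (\<forall>n. \<forall>a\<in>B n. (1/2) ^ n \<le> \<nu> a)"

lemma length_mult_le_fa_measure:
  assumes "fa_measure \<nu>" "disjoint_list ps" "\<forall>p\<in>set ps. p \<le> a" "\<forall>p\<in>set ps. \<delta> \<le> \<nu> p"
  shows "real (length ps) * \<delta> \<le> \<nu> a"
proof -
  have "real (length ps) * \<delta> \<le> (\<Sum>p\<leftarrow>ps. \<nu> p)"
    using sum_list_mono[of ps "\<lambda>_. \<delta>" \<nu>] assms(4) by (simp add: sum_list_triv)
  also have "\<dots> \<le> \<nu> a" using sum_list_le_fa_measure assms(1-3) by blast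
  finally show ?thesis .
qed

lemma two_power_diff_mult_half_power:
  assumes "n \<le> m"
  shows "2 ^ (m - n) * (1/2::real) ^ m = (1/2) ^ n"
proof -
  have "(1/2::real) ^ m = (1/2) ^ (m - n) * (1/2) ^ n" using assms by (simp flip: power_add)
  then show ?thesis by (simp add: power_one_over)
qed

text \<open>The factor \<open>3/2\<close> compensates for Kelley's criterion giving only a bound below \<open>2^-k\<close>.\<close>
lemma finite_level_approximation:
  fixes B :: "nat \<Rightarrow> 'a::boolean_algebra set"
  assumes nontriv: "(bot::'a) \<noteq> top" and split: "splitting_levels B"
    and int: "ereal ((1/2) ^ k) \<le> int_num (B k)" and "finite A"
  obtains \<nu> where "fa_measure \<nu>" "\<nu> top \<le> 2" "\<forall>n\<le>k. \<forall>a\<in>A \<inter> B n. (1/2) ^ n \<le> \<nu> a"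
proof -
  define S where "S = {(n, a). n \<le> k \<and> a \<in> A \<inter> B n}"
  have "S \<subseteq> {..k} \<times> A" by (auto simp: S_def)
  then have "finite S" using \<open>finite A\<close> by (simp add: finite_subset)
  have "\<forall>t\<in>S. \<exists>ps. length ps = 2 ^ (k - fst t) \<and> set ps \<subseteq> B k \<and> disjoint_list ps \<and> (\<forall>p\<in>set ps. p \<le> snd t)"
    using splitting_levels_refinement[OF split] by (fastforce simp: S_def)
  then obtain tr where tr: "\<And>n a. (n, a) \<in> S \<Longrightarrow> length (tr (n, a)) = 2 ^ (k - n) \<and>
      set (tr (n, a)) \<subseteq> B k \<and> disjoint_list (tr (n, a)) \<and> (\<forall>p\<in>set (tr (n, a)). p \<le> a)"
    by (metis fst_conv snd_conv bchoice)
  define X where "X = (\<Union>t\<in>S. set (tr t))"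
  have X: "finite X" "X \<subseteq> B k" using \<open>finite S\<close> tr by (auto simp: X_def)
  define \<delta> :: real where "\<delta> = 2 / 3 * (1/2) ^ k"
  obtain \<alpha> where "\<delta> < \<alpha>" "int_good \<alpha> (B k)"
    using int_good_below_int_num[OF int, of \<delta>] by (auto simp: \<delta>_def)
  then obtain \<nu> where \<nu>: "fa_probability \<nu>" "\<forall>x\<in>X. \<delta> \<le> \<nu> x"
    using int_good_imp_fa_probability_above[OF nontriv _ X] by blast
  have fa: "fa_measure \<nu>" "\<nu> top = 1" using \<nu>(1) unfolding fa_probability_def by auto
  show ?thesis
  proof (rule that[of "\<lambda>x. 3 / 2 * \<nu> x"])
    show "fa_measure (\<lambda>x. 3 / 2 * \<nu> x)" using fa(1) by (rule fa_measure_scale) simp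
    show "3 / 2 * \<nu> top \<le> 2" using fa(2) by simp
    show "\<forall>n\<le>k. \<forall>a\<in>A \<inter> B n. (1/2) ^ n \<le> 3 / 2 * \<nu> a"
    proof (intro allI impI ballI)
      fix n a assume "n \<le> k" "a \<in> A \<inter> B n"
      then have t: "(n, a) \<in> S" by (simp add: S_def)
      have "real (length (tr (n, a))) * \<delta> \<le> \<nu> a"
        using tr[OF t] \<nu>(2) t by (intro length_mult_le_fa_measure[OF fa(1)]) (auto simp: X_def)
      moreover have "real (length (tr (n, a))) * \<delta> = 2 / 3 * (2 ^ (k - n) * (1/2) ^ k)"
        using tr[OF t] by (simp add: \<delta>_def)
      ultimately show "(1/2) ^ n \<le> 3 / 2 * \<nu> a"
        unfolding two_power_diff_mult_half_power[OF \<open>n \<le> k\<close>] by simp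
    qed
  qed
qed

lemma closed_fa_measures: "closed {\<nu>::'a::boolean_algebra \<Rightarrow> real. fa_measure \<nu>}"
  unfolding fa_measure_def Collect_conj_eq
proof (intro closed_Int closed_Collect_all)
  show "closed {\<nu>::'a \<Rightarrow> real. 0 \<le> \<nu> a}" for a
    by (intro closed_Collect_le continuous_on_const) simp
  show "closed {\<nu>::'a \<Rightarrow> real. inf a b = bot \<longrightarrow> \<nu> (sup a b) = \<nu> a + \<nu> b}" for a b
    by (cases "inf a b = bot") (simp_all add: closed_Collect_eq continuous_on_add)
qed

lemma compact_bounded_fa_measures: "compact {\<nu>::'a::boolean_algebra \<Rightarrow> real. fa_measure \<nu> \<and> \<nu> top \<le> c}"
proof -
  have "compactin (product_topology (\<lambda>_. euclidean) UNIV) (PiE (UNIV::'a set) (\<lambda>_. {0..c}))"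
    by (simp add: compactin_PiE)
  then have box: "compact ((UNIV::'a set) \<rightarrow> {0..c})"
    by (simp add: euclidean_product_topology compactin_euclidean_iff PiE_UNIV_domain)
  have closed: "closed {\<nu>::'a \<Rightarrow> real. fa_measure \<nu> \<and> \<nu> top \<le> c}"
    unfolding Collect_conj_eq by (intro closed_Int closed_fa_measures closed_Collect_le) simp_all
  have sub: "{\<nu>::'a \<Rightarrow> real. fa_measure \<nu> \<and> \<nu> top \<le> c} \<subseteq> UNIV \<rightarrow> {0..c}"
  proof (intro subsetI Pi_I)
    fix \<nu> :: "'a \<Rightarrow> real" and a assume "\<nu> \<in> {\<nu>. fa_measure \<nu> \<and> \<nu> top \<le> c}"
    then show "\<nu> a \<in> {0..c}" using fa_measure_nonneg[of \<nu> a] fa_measure_le_top[of \<nu> a] by auto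
  qed
  show ?thesis using compact_Int_closed[OF box closed] unfolding Int_absorb1[OF sub] .
qed

lemma closed_level_bounded: "closed {\<nu>::'a \<Rightarrow> real. level_bounded B \<nu>}"
  unfolding level_bounded_def Ball_def by (intro closed_Collect_all closed_Collect_imp closed_Collect_le) simp_all

lemma compact_level_bounded_fa_measures:
  "compact {\<nu>::'a::boolean_algebra \<Rightarrow> real. fa_measure \<nu> \<and> \<nu> top \<le> 2 \<and> level_bounded B \<nu>}"
  using compact_Int_closed[OF compact_bounded_fa_measures closed_level_bounded]
  by (simp add: Collect_conj_eq Int_assoc)

lemma level_bounded_fa_measure_exists:
  fixes B :: "nat \<Rightarrow> 'a::boolean_algebra set"
  assumes nontriv: "(bot::'a) \<noteq> top" and split: "splitting_levels B"
    and int: "\<And>n. ereal ((1/2) ^ n) \<le> int_num (B n)"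
  shows "\<exists>\<nu>. fa_measure \<nu> \<and> \<nu> top \<le> 2 \<and> level_bounded B \<nu>"
proof -
  define lb where "lb t = {\<nu>::'a \<Rightarrow> real. (1/2) ^ fst t \<le> \<nu> (snd t)}" for t :: "nat \<times> 'a"
  have "{\<nu>::'a \<Rightarrow> real. fa_measure \<nu> \<and> \<nu> top \<le> 2} \<inter> (\<Inter>t\<in>Sigma UNIV B. lb t) \<noteq> {}"
  proof (rule compact_imp_fip_image[OF compact_bounded_fa_measures])
    show "closed (lb t)" for t unfolding lb_def by (intro closed_Collect_le) simp_all
    fix T assume T: "finite T" "T \<subseteq> Sigma UNIV B"
    define k where "k = Max (insert 0 (fst ` T))"
    obtain \<nu> where \<nu>: "fa_measure \<nu>" "\<nu> top \<le> 2" "\<forall>n\<le>k. \<forall>a\<in>snd ` T \<inter> B n. (1/2) ^ n \<le> \<nu> a"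
      using finite_level_approximation[OF nontriv split int, of "snd ` T"] T(1) by blast
    have "\<nu> \<in> lb (n, a)" if "(n, a) \<in> T" for n a
    proof -
      have "n \<le> k" unfolding k_def using T(1) that by (intro Max_ge) force+
      moreover have "a \<in> snd ` T \<inter> B n" using T(2) that by force
      ultimately show ?thesis using \<nu>(3) unfolding lb_def by simp
    qed
    with \<nu>(1,2) have "\<nu> \<in> {\<nu>. fa_measure \<nu> \<and> \<nu> top \<le> 2} \<inter> (\<Inter>t\<in>T. lb t)" by auto
    then show "{\<nu>. fa_measure \<nu> \<and> \<nu> top \<le> 2} \<inter> (\<Inter>t\<in>T. lb t) \<noteq> {}" by blast
  qed
  then show ?thesis unfolding lb_def level_bounded_def by auto
qed

lemma fa_measure_without_fine_partition:
  assumes fa: "fa_measure \<nu>" and coarse: "\<not> (\<exists>ps. finite_partition_of_unit ps \<and> (\<forall>p\<in>set ps. \<nu> p < \<epsilon>))"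
  obtains U where "ultrafilter U" "\<forall>x\<in>U. \<epsilon> \<le> \<nu> x"
proof -
  have "foldr sup xs bot \<noteq> top" if small: "set xs \<subseteq> {a. \<nu> a < \<epsilon>}" for xs
  proof
    assume "foldr sup xs bot = top"
    then have "finite_partition_of_unit (disjointed_list xs)"
      unfolding finite_partition_of_unit_def disjoint_list_iff_nth[symmetric]
      by (simp add: foldr_sup_disjointed_list disjoint_list_disjointed_list)
    moreover have "\<nu> p < \<epsilon>" if p: "p \<in> set (disjointed_list xs)" for p
    proof -
      obtain x where "x \<in> set xs" "p \<le> x" using disjointed_list_le[OF p] by blast
      then show ?thesis using small fa_measure_mono[OF fa, of p x] by auto
    qed
    ultimately show False using coarse by blast
  qed
  then obtain U where U: "ultrafilter U" "U \<inter> {a. \<nu> a < \<epsilon>} = {}"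
    using ultrafilter_avoiding[of "{a. \<nu> a < \<epsilon>}"] by blast
  have "\<forall>x\<in>U. \<epsilon> \<le> \<nu> x" using U(2) by (auto simp: not_less[symmetric])
  with U(1) show ?thesis by (rule that)
qed

lemma fa_measure_remove_ultrafilter_mass:
  assumes fa: "fa_measure \<nu>" and U: "ultrafilter U" and mass: "\<forall>x\<in>U. \<epsilon> \<le> \<nu> x"
  shows "fa_measure (\<lambda>x. \<nu> x - \<epsilon> * ultrafilter_measure U x)"
  unfolding fa_measure_def
proof (intro conjI allI impI)
  show "0 \<le> \<nu> a - \<epsilon> * ultrafilter_measure U a" for a
    using mass fa_measure_nonneg[OF fa, of a] by (auto simp: ultrafilter_measure_def)
  have "fa_measure (ultrafilter_measure U)"
    using fa_probability_ultrafilter_measure[OF U] unfolding fa_probability_def by simp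
  then show "\<nu> (sup a b) - \<epsilon> * ultrafilter_measure U (sup a b) =
      \<nu> a - \<epsilon> * ultrafilter_measure U a + (\<nu> b - \<epsilon> * ultrafilter_measure U b)"
    if "inf a b = bot" for a b
    using fa_measure_add[OF fa that] fa_measure_add[of "ultrafilter_measure U", OF _ that]
    by (simp add: algebra_simps)
qed

lemma length_minus_one_mult_le_fa_measure:
  assumes fa: "fa_measure \<nu>" and U: "ultrafilter U" and ps: "disjoint_list ps" "\<forall>p\<in>set ps. p \<le> a"
    and outside: "\<forall>p\<in>set ps. p \<notin> U \<longrightarrow> \<delta> \<le> \<nu> p" and "0 \<le> \<delta>"
  shows "real (length ps - 1) * \<delta> \<le> \<nu> a"
proof -
  have count: "(\<Sum>p\<leftarrow>qs. if p \<in> U then 0 else \<delta>) = real (length (filter (\<lambda>p. p \<notin> U) qs)) * \<delta>" for qs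
    by (induction qs) (auto simp: algebra_simps)
  have "length ps - 1 \<le> length (filter (\<lambda>p. p \<notin> U) ps)"
    using ultrafilter_disjoint_list[OF U ps(1)] sum_length_filter_compl[of "\<lambda>p. p \<in> U" ps] by linarith
  then have "real (length ps - 1) \<le> real (length (filter (\<lambda>p. p \<notin> U) ps))" by (simp only: of_nat_le_iff)
  then have "real (length ps - 1) * \<delta> \<le> (\<Sum>p\<leftarrow>ps. if p \<in> U then 0 else \<delta>)"
    unfolding count using \<open>0 \<le> \<delta>\<close> by (rule mult_right_mono)
  also have "\<dots> \<le> (\<Sum>p\<leftarrow>ps. \<nu> p)"
    using outside fa_measure_nonneg[OF fa] by (intro sum_list_mono) simp
  also have "\<dots> \<le> \<nu> a" using sum_list_le_fa_measure[OF fa ps] .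
  finally show ?thesis .
qed

text \<open>Below an element of \<open>B n\<close> lie \<open>2^k\<close> disjoint elements of \<open>B (n + k)\<close>, of which the ultrafilter
  contains at most one; the others keep their mass \<open>2^-(n+k)\<close>.\<close>
lemma level_bounded_remove_ultrafilter_mass:
  assumes split: "splitting_levels B" and lb: "level_bounded B \<nu>" and U: "ultrafilter U"
    and fa: "fa_measure (\<lambda>x. \<nu> x - \<epsilon> * ultrafilter_measure U x)"
  shows "level_bounded B (\<lambda>x. \<nu> x - \<epsilon> * ultrafilter_measure U x)"
  unfolding level_bounded_def
proof (intro allI ballI)
  fix n a assume a: "a \<in> B n"
  define \<nu>' where "\<nu>' x = \<nu> x - \<epsilon> * ultrafilter_measure U x" for x
  have "(1/2) ^ n \<le> \<nu>' a + e" if e: "0 < e" for e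
  proof -
    obtain k where k: "(1/2::real) ^ k < e" using real_arch_pow_inv[OF e, of "1/2"] by auto
    obtain ps where ps: "length ps = 2 ^ k" "set ps \<subseteq> B (n + k)" "disjoint_list ps" "\<forall>p\<in>set ps. p \<le> a"
      using splitting_levels_refinement[OF split a] by blast
    have "\<forall>p\<in>set ps. p \<notin> U \<longrightarrow> (1/2) ^ (n + k) \<le> \<nu>' p"
      using lb ps(2) by (auto simp: \<nu>'_def ultrafilter_measure_def level_bounded_def)
    then have "real (length ps - 1) * (1/2) ^ (n + k) \<le> \<nu>' a"
      by (intro length_minus_one_mult_le_fa_measure[OF fa[folded \<nu>'_def] U ps(3,4)]) simp_all
    moreover have "real (length ps - 1) * (1/2::real) ^ (n + k) = (1/2) ^ n - (1/2) ^ (n + k)"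
    proof -
      have "real (length ps - 1) = 2 ^ k - 1" using ps(1) by (simp add: of_nat_diff)
      then show ?thesis using two_power_diff_mult_half_power[of n "n + k"] by (simp add: left_diff_distrib)
    qed
    moreover have "(1/2::real) ^ (n + k) \<le> (1/2) ^ k" by (rule power_decreasing) simp_all
    ultimately show ?thesis using k by linarith
  qed
  then show "(1/2) ^ n \<le> \<nu> a - \<epsilon> * ultrafilter_measure U a"
    unfolding \<nu>'_def by (rule field_le_epsilon)
qed

lemma fa_measure_normalize:
  assumes fa: "fa_measure \<nu>" and pos: "strictly_positive \<nu>" and atoms: "nonatomic \<nu>"
    and nontriv: "(bot::'a::boolean_algebra) \<noteq> top"
  shows "fa_probability (\<lambda>x::'a. \<nu> x / \<nu> top) \<and> strictly_positive (\<lambda>x. \<nu> x / \<nu> top) \<and>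
    nonatomic (\<lambda>x. \<nu> x / \<nu> top)"
proof (intro conjI)
  have top: "0 < \<nu> top" using pos nontriv unfolding strictly_positive_def by auto
  show "fa_probability (\<lambda>x. \<nu> x / \<nu> top)"
    using fa top unfolding fa_probability_def fa_measure_def by (simp add: add_divide_distrib)
  show "strictly_positive (\<lambda>x. \<nu> x / \<nu> top)" using pos top unfolding strictly_positive_def by simp
  show "nonatomic (\<lambda>x. \<nu> x / \<nu> top)"
    unfolding nonatomic_def
  proof (intro allI impI)
    fix \<epsilon> :: real assume "0 < \<epsilon>"
    then obtain ps where "finite_partition_of_unit ps" "\<forall>p\<in>set ps. \<nu> p < \<epsilon> * \<nu> top"
      using atoms top unfolding nonatomic_def by (meson mult_pos_pos)
    then show "\<exists>ps. finite_partition_of_unit ps \<and> (\<forall>p\<in>set ps. \<nu> p / \<nu> top < \<epsilon>)"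
      using top by (auto simp: divide_less_eq)
  qed
qed

lemma nonatomic_probability_of_levels:
  fixes B :: "nat \<Rightarrow> 'a::boolean_algebra set"
  assumes nontriv: "(bot::'a) \<noteq> top" and cover: "(\<Union>n. B n) = UNIV - {bot}"
    and int: "\<And>n. ereal ((1/2) ^ n) \<le> int_num (B n)" and split: "splitting_levels B"
  shows "\<exists>\<mu> :: 'a \<Rightarrow> real. fa_probability \<mu> \<and> strictly_positive \<mu> \<and> nonatomic \<mu>"
proof -
  define M where "M = {\<nu>::'a \<Rightarrow> real. fa_measure \<nu> \<and> \<nu> top \<le> 2 \<and> level_bounded B \<nu>}"
  have "compact M" "M \<noteq> {}"
    using compact_level_bounded_fa_measures level_bounded_fa_measure_exists[OF nontriv split int]
    by (auto simp: M_def)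
  moreover have "continuous_on M (\<lambda>\<nu>. \<nu> top)" by (rule continuous_on_subset[of UNIV]) simp_all
  ultimately obtain \<nu> where \<nu>: "\<nu> \<in> M" and least: "\<And>\<nu>'. \<nu>' \<in> M \<Longrightarrow> \<nu> top \<le> \<nu>' top"
    using continuous_attains_inf[of M "\<lambda>\<nu>. \<nu> top"] by blast
  have fa: "fa_measure \<nu>" and lb: "level_bounded B \<nu>" using \<nu> by (auto simp: M_def)
  have "strictly_positive \<nu>"
    unfolding strictly_positive_def
  proof (intro allI impI)
    fix a :: 'a assume "a \<noteq> bot"
    then obtain n where "a \<in> B n" using cover by auto
    then show "0 < \<nu> a" using lb unfolding level_bounded_def by (meson less_le_trans zero_less_divide_1_iff zero_less_numeral zero_less_power)
  qed
  moreover have "nonatomic \<nu>"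
    unfolding nonatomic_def
  proof (intro allI impI; rule ccontr)
    fix \<epsilon> :: real assume "0 < \<epsilon>" and coarse: "\<not> (\<exists>ps. finite_partition_of_unit ps \<and> (\<forall>p\<in>set ps. \<nu> p < \<epsilon>))"
    obtain U where U: "ultrafilter U" "\<forall>x\<in>U. \<epsilon> \<le> \<nu> x"
      using fa_measure_without_fine_partition[OF fa coarse] by blast
    define \<nu>' where "\<nu>' = (\<lambda>x. \<nu> x - \<epsilon> * ultrafilter_measure U x)"
    have fa': "fa_measure \<nu>'" unfolding \<nu>'_def by (rule fa_measure_remove_ultrafilter_mass[OF fa U])
    have "level_bounded B \<nu>'"
      unfolding \<nu>'_def by (rule level_bounded_remove_ultrafilter_mass[OF split lb U(1) fa'[unfolded \<nu>'_def]])
    moreover have "\<nu>' top = \<nu> top - \<epsilon>"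
      using ultrafilter_top[OF U(1)] by (simp add: \<nu>'_def ultrafilter_measure_def)
    ultimately have "\<nu>' \<in> M" and "\<nu>' top < \<nu> top" using fa' \<nu> \<open>0 < \<epsilon>\<close> by (auto simp: M_def)
    then show False using least[of \<nu>'] by simp
  qed
  ultimately show ?thesis using fa_measure_normalize[OF fa _ _ nontriv] by blast
qed

theorem theorem4p1:
  assumes nontriv: "(bot::'a::boolean_algebra) \<noteq> top"
  shows "(\<exists>\<mu> :: 'a \<Rightarrow> real. fa_probability \<mu> \<and> strictly_positive \<mu> \<and> nonatomic \<mu>)
     \<longleftrightarrow>
     (\<exists>B :: nat \<Rightarrow> 'a set. (\<Union>n. B n) = UNIV - {bot} \<and>
        (\<forall>n. B n \<subseteq> B (Suc n)) \<and>
        (\<forall>n. int_num (B n) \<ge> ereal ((1/2) ^ n)) \<and>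
        (\<forall>n. \<forall>a\<in>B n. \<exists>b\<in>B (Suc n). \<exists>c\<in>B (Suc n). inf b c = bot \<and> sup b c \<le> a))"
proof
  assume "\<exists>\<mu> :: 'a \<Rightarrow> real. fa_probability \<mu> \<and> strictly_positive \<mu> \<and> nonatomic \<mu>"
  then obtain \<mu> :: "'a \<Rightarrow> real" where "fa_probability \<mu>" "strictly_positive \<mu>" "nonatomic \<mu>"
    by blast
  from levels_of_nonatomic_probability[OF nontriv this]
  show "\<exists>B :: nat \<Rightarrow> 'a set. (\<Union>n. B n) = UNIV - {bot} \<and> (\<forall>n. B n \<subseteq> B (Suc n)) \<and>
      (\<forall>n. int_num (B n) \<ge> ereal ((1/2) ^ n)) \<and>
      (\<forall>n. \<forall>a\<in>B n. \<exists>b\<in>B (Suc n). \<exists>c\<in>B (Suc n). inf b c = bot \<and> sup b c \<le> a)"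
    unfolding splitting_levels_def .
next
  assume "\<exists>B :: nat \<Rightarrow> 'a set. (\<Union>n. B n) = UNIV - {bot} \<and> (\<forall>n. B n \<subseteq> B (Suc n)) \<and>
      (\<forall>n. int_num (B n) \<ge> ereal ((1/2) ^ n)) \<and>
      (\<forall>n. \<forall>a\<in>B n. \<exists>b\<in>B (Suc n). \<exists>c\<in>B (Suc n). inf b c = bot \<and> sup b c \<le> a)"
  then obtain B :: "nat \<Rightarrow> 'a set" where "(\<Union>n. B n) = UNIV - {bot}"
      "\<And>n. int_num (B n) \<ge> ereal ((1/2) ^ n)" "splitting_levels B"
    unfolding splitting_levels_def by blast
  then show "\<exists>\<mu> :: 'a \<Rightarrow> real. fa_probability \<mu> \<and> strictly_positive \<mu> \<and> nonatomic \<mu>"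
    by (rule nonatomic_probability_of_levels[OF nontriv])
qed

end
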